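(* For every integer $n\ge0$, every $k\in\mathcal K$ and every pair $s<s'$ in $S$: (1) if $n$ is odd, then $m_{n+1}^{(s'),\dagger}(k)-m_n^{(s'),\dagger}(k)\ge m_{n+1}^{(s),\dagger}(k)-m_n^{(s),\dagger}(k)$; (2) if $n$ is even, then $m_{n+1}^{(s'),\dagger}(k)-m_n^{(s'),\dagger}(k)\le m_{n+1}^{(s),\dagger}(k)-m_n^{(s),\dagger}(k)$.
   Context: Fix a prime $p\ge7$ and $k_0\in\{2,\dots,p\}$. $\{n\}$ is the residue of $n$ mod $p-1$ in $\{0,\dots,p-2\}$. $\mathcal K=\{k\ge2:k\equiv k_0\pmod{p-1}\}$, $k_\bullet=(k-k_0)/(p-1)$. For $s\in\{0,\dots,p-2\}$: $a_s=\{k_0-2-2s\}$, $\delta_s=\lfloor\frac{s+\{a_s+s\}}{p-1}\rfloor$; if $a_s+s<p-1$, $t_1^{(s)}=s+\delta_s$, $t_2^{(s)}=a_s+s+\delta_s+2$; otherwise $t_1^{(s)}=\{a_s+s\}+\delta_s+1$, $t_2^{(s)}=s+\delta_s+1$. For $k\in\mathcal K$: $d_k^{ur,\dagger}(s)=\lfloor\frac{k_\bullet-t_1^{(s)}}{p+1}\rfloor+\lfloor\frac{k_\bullet-t_2^{(s)}}{p+1}\rfloor+2+\delta_s$, $d_k^{Iw,\dagger}=2k_\bullet+2$, and $m_n^{(s),\dagger}(k)=\min\{n-d_k^{ur,\dagger}(s),d_k^{Iw,\dagger}-d_k^{ur,\dagger}(s)-n\}$ if $d_k^{ur,\dagger}(s)<n<d_k^{Iw,\dagger}-d_k^{ur,\dagger}(s)$,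 else $0$. $S=\{\lceil\frac{k_0+1}{2}\rceil,\dots,\lfloor\frac{k_0+p-4}{2}\rfloor\}$. *)

theory Defs
  imports Complex_Main "HOL-Computational_Algebra.Primes" "HOL-Number_Theory.Cong"
begin

(* {n}: residue of n mod (p-1), in {0..p-2} (int mod is nonnegative for positive modulus) *)
definition res :: "int \<Rightarrow> int \<Rightarrow> int" where
  "res p n = n mod (p - 1)"

definition a_s :: "int \<Rightarrow> int \<Rightarrow> int \<Rightarrow> int" where
  "a_s p k0 s = res p (k0 - 2 - 2 * s)"

(* floor division of integers: div on int is floor division *)
definition delta_s :: "int \<Rightarrow> int \<Rightarrow> int \<Rightarrow> int" where
  "delta_s p k0 s = (s + res p (a_s p k0 s + s)) div (p - 1)"

definition t1 :: "int \<Rightarrow> int \<Rightarrow> int \<Rightarrow> int" where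
  "t1 p k0 s = (if a_s p k0 s + s < p - 1 then s + delta_s p k0 s
                else res p (a_s p k0 s + s) + delta_s p k0 s + 1)"

definition t2 :: "int \<Rightarrow> int \<Rightarrow> int \<Rightarrow> int" where
  "t2 p k0 s = (if a_s p k0 s + s < p - 1 then a_s p k0 s + s + delta_s p k0 s + 2
                else s + delta_s p k0 s + 1)"

definition Kset :: "int \<Rightarrow> int \<Rightarrow> int set" where
  "Kset p k0 = {k. k \<ge> 2 \<and> [k = k0] (mod (p - 1))}"

(* k_bullet = (k - k0)/(p-1), exact for k in K *)
definition kbul :: "int \<Rightarrow> int \<Rightarrow> int \<Rightarrow> int" where
  "kbul p k0 k = (k - k0) div (p - 1)"

definition d_ur :: "int \<Rightarrow> int \<Rightarrow> int \<Rightarrow> int \<Rightarrow> int" where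
  "d_ur p k0 k s = (kbul p k0 k - t1 p k0 s) div (p + 1)
                 + (kbul p k0 k - t2 p k0 s) div (p + 1) + 2 + delta_s p k0 s"

definition d_Iw :: "int \<Rightarrow> int \<Rightarrow> int \<Rightarrow> int" where
  "d_Iw p k0 k = 2 * kbul p k0 k + 2"

definition m_dag :: "int \<Rightarrow> int \<Rightarrow> int \<Rightarrow> int \<Rightarrow> int \<Rightarrow> int" where
  "m_dag p k0 s n k =
     (if d_ur p k0 k s < n \<and> n < d_Iw p k0 k - d_ur p k0 k s
      then min (n - d_ur p k0 k s) (d_Iw p k0 k - d_ur p k0 k s - n)
      else 0)"

definition Sset :: "int \<Rightarrow> int \<Rightarrow> int set" where
  "Sset p k0 = {\<lceil>(real_of_int k0 + 1) / 2\<rceil> .. \<lfloor>(real_of_int k0 + real_of_int p - 4) / 2\<rfloor>}"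

end

theory Submission
  imports Defs
begin

(* On S the unramified invariant is d_ur(s) = 2 q + c(s), where k\<bullet> = q (p + 1) + r and c(s) counts
   the thresholds k0 - 1 - s < s + 1 < k0 + p - s that are at most r.  As s grows the outer thresholds
   move down and the middle one up, so c(s) never leaves an odd value and otherwise moves by at most
   one.  Since d_Iw = 2 k\<bullet> + 2, the function n \<mapsto> m_n is a tent with feet d_ur and d_Iw - d_ur and even
   total width; moving an even foot by one only lowers an increment at an even n or raises one at an
   odd n. *)

lemma diff_div_eq:
  fixes x t P :: int
  assumes "0 < P" "0 \<le> t" "t \<le> P"
  shows "(x - t) div P = x div P - of_bool (x mod P < t)"
proof (cases "x mod P < t")
  case True
  have eq: "x - t = (x mod P - t + P) + (x div P - 1) * P" by (simp add: algebra_simps)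
  have "(x mod P - t + P) div P = 0"
    using True assms pos_mod_sign[of P x] by (intro div_pos_pos_trivial) linarith+
  then show ?thesis using True assms(1) by (subst eq) simp
next
  case False
  have eq: "x - t = (x mod P - t) + x div P * P" by simp
  have "(x mod P - t) div P = 0"
    using False assms pos_mod_bound[of P x] by (intro div_pos_pos_trivial) linarith+
  then show ?thesis using False assms(1) by (subst eq) simp
qed

definition tent :: "int \<Rightarrow> int \<Rightarrow> int \<Rightarrow> int" where
  "tent a b n = (if a < n \<and> n < b then min (n - a) (b - n) else 0)"

lemma tent_increment:
  assumes "even (a + b)"
  shows "tent a b (n + 1) - tent a b n =
    (if a \<le> n \<and> 2 * n < a + b then 1 else if a + b \<le> 2 * n \<and> n < b then -1 else 0)"
  using assms unfolding tent_def min_def by auto presburger+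

lemma tent_increment_parity:
  fixes N d d' n :: int
  assumes "even N" "even d" "\<bar>d' - d\<bar> \<le> 1"
  shows "(odd n \<longrightarrow>
            tent d' (N - d') (n + 1) - tent d' (N - d') n \<ge> tent d (N - d) (n + 1) - tent d (N - d) n)
       \<and> (even n \<longrightarrow>
            tent d' (N - d') (n + 1) - tent d' (N - d') n \<le> tent d (N - d) (n + 1) - tent d (N - d) n)"
  using assms by (simp add: tent_increment) presburger

lemma m_dag_eq_tent: "m_dag p k0 s n k = tent (d_ur p k0 k s) (d_Iw p k0 k - d_ur p k0 k s) n"
  unfolding m_dag_def tent_def ..

lemma Sset_bounds:
  assumes "s \<in> Sset p k0"
  shows "k0 + 1 \<le> 2 * s" "2 * s \<le> k0 + p - 4"
proof -
  have "(real_of_int k0 + 1) / 2 \<le> s" "s \<le> (real_of_int k0 + real_of_int p - 4) / 2"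
    using assms unfolding Sset_def by (simp_all add: ceiling_le_iff le_floor_iff)
  then have "real_of_int (k0 + 1) \<le> real_of_int (2 * s)" "real_of_int (2 * s) \<le> real_of_int (k0 + p - 4)"
    by simp_all
  then show "k0 + 1 \<le> 2 * s" "2 * s \<le> k0 + p - 4" by simp_all
qed

lemma a_s_eq:
  assumes "k0 + 1 \<le> 2 * s" "2 * s \<le> k0 + p - 4"
  shows "a_s p k0 s = k0 + p - 3 - 2 * s"
proof -
  have "(k0 - 2 - 2 * s) mod (p - 1) = (k0 + p - 3 - 2 * s + (- 1) * (p - 1)) mod (p - 1)"
    by (rule arg_cong[of _ _ "\<lambda>x. x mod (p - 1)"]) simp
  also have "\<dots> = (k0 + p - 3 - 2 * s) mod (p - 1)" by (rule mod_mult_self1)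
  also have "\<dots> = k0 + p - 3 - 2 * s" using assms by (intro mod_pos_pos_trivial) auto
  finally show ?thesis unfolding a_s_def res_def .
qed

lemma ur_params_large_s:
  assumes "2 \<le> k0" "k0 \<le> p" "k0 + 1 \<le> 2 * s" "2 * s \<le> k0 + p - 4" "k0 - 1 \<le> s"
  shows "delta_s p k0 s = 1" "t1 p k0 s = s + 1" "t2 p k0 s = k0 + p - s"
proof -
  have sum: "a_s p k0 s + s = k0 + p - 3 - s" using a_s_eq assms by simp
  have res: "res p (a_s p k0 s + s) = k0 + p - 3 - s"
    unfolding res_def sum using assms by (intro mod_pos_pos_trivial) auto
  have "(k0 - 2 + 1 * (p - 1)) div (p - 1) = 1"
    using assms by (subst div_mult_self1) (auto simp: div_pos_pos_trivial)
  then show delta: "delta_s p k0 s = 1" unfolding delta_s_def res by (simp add: algebra_simps)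
  show "t1 p k0 s = s + 1" "t2 p k0 s = k0 + p - s"
    unfolding t1_def t2_def delta using sum assms by auto
qed

lemma ur_params_small_s:
  assumes "2 \<le> k0" "k0 \<le> p" "k0 + 1 \<le> 2 * s" "2 * s \<le> k0 + p - 4" "s < k0 - 1"
  shows "delta_s p k0 s = 0" "t1 p k0 s = k0 - 1 - s" "t2 p k0 s = s + 1"
proof -
  have sum: "a_s p k0 s + s = k0 - 2 - s + 1 * (p - 1)" using a_s_eq assms by simp
  then have res: "res p (a_s p k0 s + s) = k0 - 2 - s"
    unfolding res_def sum mod_mult_self1 using assms by (intro mod_pos_pos_trivial) auto
  then show delta: "delta_s p k0 s = 0"
    unfolding delta_s_def using assms by (intro div_pos_pos_trivial) auto
  show "t1 p k0 s = k0 - 1 - s" "t2 p k0 s = s + 1"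
    unfolding t1_def t2_def delta res using sum assms by auto
qed

(* With r = k\<bullet> mod (p + 1) every floor in d_ur equals k\<bullet> div (p + 1) - [r < t].  Of the three
   thresholds only two are t1, t2; for 0 \<le> r \<le> p the third one is passed exactly when delta_s = 1,
   which absorbs delta_s. *)
definition ur_offset :: "int \<Rightarrow> int \<Rightarrow> int \<Rightarrow> int \<Rightarrow> int" where
  "ur_offset p k0 s r = of_bool (k0 - 1 - s \<le> r) + of_bool (s + 1 \<le> r) + of_bool (k0 + p - s \<le> r)"

lemma d_ur_eq_ur_offset:
  assumes "2 \<le> k0" "k0 \<le> p" "k0 + 1 \<le> 2 * s" "2 * s \<le> k0 + p - 4"
  shows "d_ur p k0 k s = 2 * (kbul p k0 k div (p + 1)) + ur_offset p k0 s (kbul p k0 k mod (p + 1))"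
proof -
  let ?x = "kbul p k0 k"
  define r where "r = ?x mod (p + 1)"
  have r: "0 \<le> r" "r \<le> p"
    unfolding r_def using assms pos_mod_sign[of "p + 1" ?x] pos_mod_bound[of "p + 1" ?x] by linarith+
  have floor_shift: "(?x - t) div (p + 1) = ?x div (p + 1) - of_bool (r < t)"
    if "0 \<le> t" "t \<le> p + 1" for t
    unfolding r_def using diff_div_eq[of "p + 1" t ?x] that assms by simp
  have "d_ur p k0 k s = 2 * (?x div (p + 1)) + ur_offset p k0 s r"
  proof (cases "k0 - 1 \<le> s")
    case True
    then show ?thesis
      using ur_params_large_s[OF assms True] floor_shift[of "s + 1"] floor_shift[of "k0 + p - s"] r assms
      unfolding d_ur_def ur_offset_def by auto
  next
    case False
    then show ?thesis
      using ur_params_small_s[OF assms] floor_shift[of "k0 - 1 - s"] floor_shift[of "s + 1"] r assms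
      unfolding d_ur_def ur_offset_def by auto
  qed
  then show ?thesis unfolding r_def .
qed

lemma ur_offset_changes_only_when_even:
  assumes "k0 \<le> 2 * s" "s < s'" "2 * s' < k0 + p - 1"
  shows "ur_offset p k0 s' r = ur_offset p k0 s r
    \<or> even (ur_offset p k0 s r) \<and> \<bar>ur_offset p k0 s' r - ur_offset p k0 s r\<bar> \<le> 1"
  using assms unfolding ur_offset_def by auto

theorem mainTheorem11:
  fixes p k0 n k s s' :: int
  assumes "prime p" and "p \<ge> 7"
    and "2 \<le> k0" and "k0 \<le> p"
    and "n \<ge> 0"
    and "k \<in> Kset p k0"
    and "s \<in> Sset p k0" and "s' \<in> Sset p k0" and "s < s'"
  shows "(odd n \<longrightarrow>
            m_dag p k0 s' (n + 1) k - m_dag p k0 s' n k \<ge> m_dag p k0 s (n + 1) k - m_dag p k0 s n k)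
       \<and> (even n \<longrightarrow>
            m_dag p k0 s' (n + 1) k - m_dag p k0 s' n k \<le> m_dag p k0 s (n + 1) k - m_dag p k0 s n k)"
proof -
  note k0 = \<open>2 \<le> k0\<close> \<open>k0 \<le> p\<close>
  note s = Sset_bounds[OF \<open>s \<in> Sset p k0\<close>] and s' = Sset_bounds[OF \<open>s' \<in> Sset p k0\<close>]
  let ?d = "d_ur p k0 k s" and ?d' = "d_ur p k0 k s'"
  have "?d' = ?d \<or> even ?d \<and> \<bar>?d' - ?d\<bar> \<le> 1"
    using d_ur_eq_ur_offset[OF k0 s, of k] d_ur_eq_ur_offset[OF k0 s', of k]
      ur_offset_changes_only_when_even[of k0 s s' p "kbul p k0 k mod (p + 1)"] s s' \<open>s < s'\<close>
    by auto
  moreover have "even (d_Iw p k0 k)" unfolding d_Iw_def by simp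
  ultimately show ?thesis
    unfolding m_dag_eq_tent using tent_increment_parity by auto
qed

end
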